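(* Consider the following setting. Let $\mathcal{Z}=\mathcal{Z}_1\times\cdots\times\mathcal{Z}_N\subset\mathbb{R}^n$ be a product of nonempty convex compact sets, and for each $i$ let $C_i:\mathcal{Z}_i\to\mathbb{R}$ be twice differentiable with $\nabla^2 C_i(z_i)\succeq\sigma_c I$ for some $\sigma_c>0$ and with Lipschitz continuous gradient on $\mathcal{Z}_i$. Let $g(z)=Rz+g_0$ be an affine map $\mathbb{R}^n\to\mathbb{R}^m$ ($m\ge 1$) with $\|R\|_F\le\sigma_g$ for some $\sigma_g>0$. Fix $\phi>0$ and define the regularized Lagrangian $$\mathcal{L}(z,\mu)=\sum_{i=1}^N C_i(z_i)+\mu^\top g(z)-\frac{\phi}{2}\|\mu\|^2,$$ the dual function $h(\mu)=\min_{z\in\mathcal{Z}}\mathcal{L}(z,\mu)$ for $\mu\in\mathbb{R}^m_{\ge 0}$. Suppose $\sigma_h>0$ is a constant such that for all $\mu,\tilde\mu\in\mathbb{R}^m_{\ge0}$, $$\big(\nabla h(\mu)-\nabla h(\tilde\mu)\big)^\top(\mu-\tilde\mu)\le-\sigma_h\|\mu-\tilde\mu\|^2 .$$ Then $\sigma_h\le \sigma_g^2/\sigma_c+\phi$.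
   Context: $\|\cdot\|$ is the Euclidean norm and $\|\cdot\|_F$ the Frobenius norm. Under the stated hypotheses, $h$ is differentiable on $\mathbb{R}^m_{\ge0}$ with $\nabla h(\mu)=g(z^*(\mu))-\phi\mu$, where $z^*(\mu)$ is the unique minimizer of $\mathcal{L}(\cdot,\mu)$ over $\mathcal{Z}$, and $\nabla h$ is Lipschitz continuous with constant $\sigma_g^2/\sigma_c+\phi$. *)

theory Defs
  imports "HOL-Analysis.Analysis"
begin

text \<open>Block structure: the coordinates of R^n (index type 'n) are partitioned into
  blocks by the map b :: 'n => 'k (block index type 'k, N = CARD('k)).
  The i-th block component z_i of z is represented as the zero-padded vector
  blockproj b k z, i.e. an element of the block subspace.\<close>

definition blockproj :: "('n::finite \<Rightarrow> 'k) \<Rightarrow> 'k \<Rightarrow> real^'n \<Rightarrow> real^'n" where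
  "blockproj b k z = (\<chi> j. if b j = k then z $ j else 0)"

definition blocksub :: "('n::finite \<Rightarrow> 'k) \<Rightarrow> 'k \<Rightarrow> (real^'n) set" where
  "blocksub b k = {x. \<forall>j. b j \<noteq> k \<longrightarrow> x $ j = 0}"

definition prodset :: "('n::finite \<Rightarrow> 'k) \<Rightarrow> ('k \<Rightarrow> (real^'n) set) \<Rightarrow> (real^'n) set" where
  "prodset b Zs = {z. \<forall>k. blockproj b k z \<in> Zs k}"

definition frobenius_norm :: "real^'n::finite^'m::finite \<Rightarrow> real" where
  "frobenius_norm A = sqrt (\<Sum>i\<in>UNIV. \<Sum>j\<in>UNIV. (A $ i $ j)^2)"

definition nonneg_orthant :: "(real^'m::finite) set" where
  "nonneg_orthant = {\<mu>. \<forall>i. 0 \<le> \<mu> $ i}"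

definition reg_lagrangian ::
  "('n::finite \<Rightarrow> 'k::finite) \<Rightarrow> ('k \<Rightarrow> real^'n \<Rightarrow> real) \<Rightarrow> real^'n^'m::finite \<Rightarrow> real^'m
     \<Rightarrow> real \<Rightarrow> real^'n \<Rightarrow> real^'m \<Rightarrow> real" where
  "reg_lagrangian b C R g0 \<phi> z \<mu> =
     (\<Sum>k\<in>UNIV. C k (blockproj b k z)) + \<mu> \<bullet> (R *v z + g0) - \<phi> / 2 * (norm \<mu>)^2"

definition dual_fun ::
  "('n::finite \<Rightarrow> 'k::finite) \<Rightarrow> ('k \<Rightarrow> (real^'n) set) \<Rightarrow> ('k \<Rightarrow> real^'n \<Rightarrow> real)
     \<Rightarrow> real^'n^'m::finite \<Rightarrow> real^'m \<Rightarrow> real \<Rightarrow> real^'m \<Rightarrow> real" where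
  "dual_fun b Zs C R g0 \<phi> \<mu> = Inf ((\<lambda>z. reg_lagrangian b C R g0 \<phi> z \<mu>) ` prodset b Zs)"

end

theory Submission
  imports Defs
begin

text \<open>Along a ray \<open>\<mu> = t d\<close> in the orthant, strong concavity forces
  \<open>h(t d) \<le> h(d) + O(t) - \<sigma>\<^sub>h \<parallel>d\<parallel>\<^sup>2 t\<^sup>2 / 2\<close>, while compactness of the feasible set gives
  \<open>h(\<mu>) \<ge> min \<Sum> C\<^sub>i - O(\<parallel>\<mu>\<parallel>) - \<phi> \<parallel>\<mu>\<parallel>\<^sup>2 / 2\<close>. Comparing the quadratic terms yields
  the sharper bound \<open>\<sigma>\<^sub>h \<le> \<phi>\<close>.\<close>

lemma quadratic_le_linear_imp_nonpos:
  fixes \<alpha> \<beta> \<gamma> :: real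
  assumes le: "\<And>T. T \<ge> 1 \<Longrightarrow> \<alpha> * T\<^sup>2 \<le> \<beta> * T + \<gamma>"
  shows "\<alpha> \<le> 0"
proof (rule ccontr)
  assume "\<not> \<alpha> \<le> 0"
  hence \<alpha>: "\<alpha> > 0" by simp
  define T where "T = 1 + (\<bar>\<beta>\<bar> + \<bar>\<gamma>\<bar>) / \<alpha>"
  have T1: "T \<ge> 1" using \<alpha> by (simp add: T_def)
  have "\<alpha> * T > \<bar>\<beta>\<bar> + \<bar>\<gamma>\<bar>" using \<alpha> by (simp add: T_def field_simps)
  hence "(\<bar>\<beta>\<bar> + \<bar>\<gamma>\<bar>) * T < \<alpha> * T\<^sup>2"
    using T1 by (simp add: power2_eq_square mult.assoc[symmetric])
  moreover have "\<beta> * T \<le> \<bar>\<beta>\<bar> * T" using T1 by (intro mult_right_mono) auto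
  moreover have "\<bar>\<gamma>\<bar> \<le> \<bar>\<gamma>\<bar> * T" using T1 by (simp add: mult_le_cancel_left1)
  ultimately show False using le[OF T1] abs_ge_self[of \<gamma>] by (simp add: distrib_right)
qed

lemma strongly_decreasing_derivative_upper_bound:
  fixes g g' :: "real \<Rightarrow> real" and a T \<sigma> :: real
  assumes deriv: "\<And>t. t \<ge> a \<Longrightarrow> (g has_real_derivative g' t) (at t)"
    and mono: "\<And>t. t \<ge> a \<Longrightarrow> (g' t - g' a) * (t - a) \<le> - \<sigma> * (t - a)\<^sup>2"
    and "a \<le> T"
  shows "g T \<le> g a + g' a * (T - a) - \<sigma> / 2 * (T - a)\<^sup>2"
proof -
  define \<psi> where "\<psi> t = g t - g' a * t + \<sigma> / 2 * (t - a)\<^sup>2" for t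
  have "\<psi> T \<le> \<psi> a"
  proof (rule DERIV_nonpos_imp_nonincreasing[OF \<open>a \<le> T\<close>])
    fix t assume t: "a \<le> t" "t \<le> T"
    have "(\<psi> has_real_derivative g' t - g' a + \<sigma> * (t - a)) (at t)"
      unfolding \<psi>_def using deriv[OF t(1)] by (auto intro!: derivative_eq_intros)
    moreover have "g' t - g' a + \<sigma> * (t - a) \<le> 0"
    proof (cases "t = a")
      case False
      with t have "t - a > 0" by simp
      moreover have "(t - a) * (g' t - g' a + \<sigma> * (t - a)) \<le> 0"
        using mono[OF t(1)] by (simp add: power2_eq_square algebra_simps)
      ultimately show ?thesis by (simp add: mult_le_0_iff)
    qed simp
    ultimately show "\<exists>y. (\<psi> has_real_derivative y) (at t) \<and> y \<le> 0" by blast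
  qed
  thus ?thesis by (simp add: \<psi>_def algebra_simps)
qed

lemma has_real_derivative_along_ray:
  fixes f :: "'a::real_inner \<Rightarrow> real"
  assumes "(f has_derivative (\<lambda>v. D \<bullet> v)) (at (t *\<^sub>R d) within S)"
    and "t *\<^sub>R d \<in> interior S"
  shows "((\<lambda>s. f (s *\<^sub>R d)) has_real_derivative D \<bullet> d) (at t)"
proof -
  have "((\<lambda>s. s *\<^sub>R d) has_derivative (\<lambda>s. s *\<^sub>R d)) (at t)"
    by (intro derivative_eq_intros) auto
  moreover have "(f has_derivative (\<lambda>v. D \<bullet> v)) (at (t *\<^sub>R d))"
    using assms at_within_interior by metis
  ultimately have "((\<lambda>s. f (s *\<^sub>R d)) has_derivative (\<lambda>s. D \<bullet> (s *\<^sub>R d))) (at t)"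
    by (rule has_derivative_compose)
  moreover have "(\<lambda>s. D \<bullet> (s *\<^sub>R d)) = (*) (D \<bullet> d)" by (auto simp: fun_eq_iff)
  ultimately show ?thesis by (simp add: has_field_derivative_def)
qed

lemma positive_orthant_subset_interior:
  "{\<mu>::real^'m::finite. \<forall>i. 0 < \<mu> $ i} \<subseteq> interior nonneg_orthant"
proof (rule interior_maximal)
  have "{\<mu>::real^'m. \<forall>i. 0 < \<mu> $ i} = (\<Inter>i. {\<mu>. 0 < \<mu> $ i})" by auto
  thus "open {\<mu>::real^'m. \<forall>i. 0 < \<mu> $ i}"
    by (simp add: open_INT open_halfspace_component_gt_cart)
qed (auto simp: nonneg_orthant_def less_imp_le)

lemma strong_concavity_modulus_le_quadratic_decay:
  fixes h :: "real^'m::finite \<Rightarrow> real" and Dh :: "real^'m \<Rightarrow> real^'m"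
  assumes grad: "\<And>\<mu>. \<mu> \<in> nonneg_orthant \<Longrightarrow>
      (h has_derivative (\<lambda>v. Dh \<mu> \<bullet> v)) (at \<mu> within nonneg_orthant)"
    and strong: "\<And>\<mu> \<mu>'. \<mu> \<in> nonneg_orthant \<Longrightarrow> \<mu>' \<in> nonneg_orthant \<Longrightarrow>
      (Dh \<mu> - Dh \<mu>') \<bullet> (\<mu> - \<mu>') \<le> - \<sigma> * (norm (\<mu> - \<mu>'))\<^sup>2"
    and decay: "\<And>\<mu>. \<mu> \<in> nonneg_orthant \<Longrightarrow> m - W * norm \<mu> - \<phi> / 2 * (norm \<mu>)\<^sup>2 \<le> h \<mu>"
  shows "\<sigma> \<le> \<phi>"
proof -
  define d :: "real^'m" where "d = (\<chi> i. 1)"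
  define nd where "nd = (norm d)\<^sup>2"
  have nd_pos: "nd > 0" by (simp add: nd_def d_def vec_eq_iff)
  have ray: "t *\<^sub>R d \<in> nonneg_orthant" if "t \<ge> 0" for t
    using that by (simp add: nonneg_orthant_def d_def)
  define g where "g t = h (t *\<^sub>R d)" for t
  define g' where "g' t = Dh (t *\<^sub>R d) \<bullet> d" for t
  have upper: "g T \<le> g 1 + g' 1 * (T - 1) - \<sigma> * nd / 2 * (T - 1)\<^sup>2" if "T \<ge> 1" for T
  proof (rule strongly_decreasing_derivative_upper_bound[OF _ _ that])
    fix t :: real assume t: "t \<ge> 1"
    have "t *\<^sub>R d \<in> interior nonneg_orthant"
      using positive_orthant_subset_interior t by (force simp: d_def)
    moreover have "(h has_derivative (\<lambda>v. Dh (t *\<^sub>R d) \<bullet> v)) (at (t *\<^sub>R d) within nonneg_orthant)"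
      using t by (intro grad ray) simp
    ultimately show "(g has_real_derivative g' t) (at t)"
      unfolding g_def g'_def by (intro has_real_derivative_along_ray)
    have "(g' t - g' 1) * (t - 1) = (Dh (t *\<^sub>R d) - Dh (1 *\<^sub>R d)) \<bullet> (t *\<^sub>R d - 1 *\<^sub>R d)"
      by (simp add: g'_def algebra_simps flip: scaleR_diff_left)
    also have "\<dots> \<le> - \<sigma> * (norm (t *\<^sub>R d - 1 *\<^sub>R d))\<^sup>2"
      using t by (intro strong ray) auto
    also have "(norm (t *\<^sub>R d - 1 *\<^sub>R d))\<^sup>2 = nd * (t - 1)\<^sup>2"
      unfolding scaleR_diff_left[symmetric] norm_scaleR power_mult_distrib power2_abs nd_def
      by (rule mult.commute)
    finally show "(g' t - g' 1) * (t - 1) \<le> - (\<sigma> * nd) * (t - 1)\<^sup>2" by simp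
  qed
  have lower: "m - W * norm d * T - \<phi> / 2 * nd * T\<^sup>2 \<le> g T" if "T \<ge> 1" for T
    using decay[OF ray, of T] that by (simp add: g_def nd_def power_mult_distrib mult_ac)
  have "(\<sigma> - \<phi>) * nd / 2 * T\<^sup>2
      \<le> (g' 1 + \<sigma> * nd + W * norm d) * T + (g 1 - g' 1 - \<sigma> * nd / 2 - m)" if "T \<ge> 1" for T
  proof -
    have "(g' 1 + \<sigma> * nd + W * norm d) * T + (g 1 - g' 1 - \<sigma> * nd / 2 - m) - (\<sigma> - \<phi>) * nd / 2 * T\<^sup>2
        = (g 1 + g' 1 * (T - 1) - \<sigma> * nd / 2 * (T - 1)\<^sup>2) - (m - W * norm d * T - \<phi> / 2 * nd * T\<^sup>2)"
      by (simp add: power2_eq_square field_simps)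
    thus ?thesis using upper[OF that] lower[OF that] by linarith
  qed
  hence "(\<sigma> - \<phi>) * nd / 2 \<le> 0" by (rule quadratic_le_linear_imp_nonpos)
  thus ?thesis using nd_pos by (simp add: mult_le_0_iff)
qed

lemma sum_blockproj:
  fixes b :: "'n::finite \<Rightarrow> 'k::finite"
  shows "(\<Sum>k\<in>UNIV. blockproj b k z) = z"
  by (simp add: vec_eq_iff blockproj_def sum_component if_distrib[of "\<lambda>x. x $ _"]
      cong: if_cong)

lemma blockproj_sum_blocksub:
  fixes b :: "'n::finite \<Rightarrow> 'k::finite"
  assumes "\<And>k. x k \<in> blocksub b k"
  shows "blockproj b k (\<Sum>k'\<in>UNIV. x k') = x k"
proof -
  have "(\<Sum>k'\<in>UNIV. x k' $ j) = x (b j) $ j" for j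
    using assms by (subst sum.mono_neutral_right[of UNIV "{b j}"]) (auto simp: blocksub_def)
  thus ?thesis using assms by (auto simp: vec_eq_iff blockproj_def sum_component blocksub_def)
qed

lemma prodset_nonempty:
  fixes b :: "'n::finite \<Rightarrow> 'k::finite"
  assumes "\<And>k. Zs k \<noteq> {}" and "\<And>k. Zs k \<subseteq> blocksub b k"
  shows "prodset b Zs \<noteq> {}"
proof -
  have "\<forall>k. \<exists>x. x \<in> Zs k" using assms(1) by blast
  then obtain x where x: "\<And>k. x k \<in> Zs k" by metis
  have "blockproj b k (\<Sum>k'\<in>UNIV. x k') = x k" for k
    by (rule blockproj_sum_blocksub) (use x assms(2) in blast)
  hence "(\<Sum>k\<in>UNIV. x k) \<in> prodset b Zs" using x by (simp add: prodset_def)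
  thus ?thesis by blast
qed

lemma bounded_prodset:
  fixes b :: "'n::finite \<Rightarrow> 'k::finite"
  assumes "\<And>k. bounded (Zs k)"
  shows "bounded (prodset b Zs)"
proof -
  have "\<forall>k. \<exists>B. \<forall>x\<in>Zs k. norm x \<le> B" using assms by (simp add: bounded_iff)
  then obtain B where B: "\<And>k x. x \<in> Zs k \<Longrightarrow> norm x \<le> B k" by metis
  have "norm z \<le> (\<Sum>k\<in>UNIV. B k)" if "z \<in> prodset b Zs" for z
  proof -
    have "norm z \<le> (\<Sum>k\<in>UNIV. norm (blockproj b k z))"
      using norm_sum[of "\<lambda>k. blockproj b k z" UNIV] by (simp add: sum_blockproj)
    also have "\<dots> \<le> (\<Sum>k\<in>UNIV. B k)"
      using that by (intro sum_mono B) (auto simp: prodset_def)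
    finally show ?thesis .
  qed
  thus ?thesis by (auto simp: bounded_iff)
qed

lemma sum_blockproj_bounded_below:
  fixes b :: "'n::finite \<Rightarrow> 'k::finite" and C :: "'k \<Rightarrow> real^'n \<Rightarrow> real"
  assumes "\<And>k. compact (Zs k)" and "\<And>k. continuous_on (Zs k) (C k)"
  obtains m where "\<And>z. z \<in> prodset b Zs \<Longrightarrow> m \<le> (\<Sum>k\<in>UNIV. C k (blockproj b k z))"
proof -
  have "bounded (C k ` Zs k)" for k
    using assms by (intro compact_imp_bounded compact_continuous_image)
  hence "\<forall>k. \<exists>B. \<forall>x\<in>Zs k. \<bar>C k x\<bar> \<le> B" by (simp add: bounded_iff)
  then obtain B where B: "\<And>k x. x \<in> Zs k \<Longrightarrow> \<bar>C k x\<bar> \<le> B k" by metis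
  have "- (\<Sum>k\<in>UNIV. B k) \<le> (\<Sum>k\<in>UNIV. C k (blockproj b k z))" if "z \<in> prodset b Zs" for z
    unfolding sum_negf[symmetric]
  proof (rule sum_mono)
    fix k
    have "blockproj b k z \<in> Zs k" using that by (simp add: prodset_def)
    thus "- B k \<le> C k (blockproj b k z)" using B by (meson abs_le_iff minus_le_iff)
  qed
  thus ?thesis using that by blast
qed

lemma dual_fun_quadratic_decay:
  assumes ne: "prodset b Zs \<noteq> {}"
    and C_ge: "\<And>z. z \<in> prodset b Zs \<Longrightarrow> m \<le> (\<Sum>k\<in>UNIV. C k (blockproj b k z))"
    and g_le: "\<And>z. z \<in> prodset b Zs \<Longrightarrow> norm (R *v z + g0) \<le> W"
  shows "m - W * norm \<mu> - \<phi> / 2 * (norm \<mu>)\<^sup>2 \<le> dual_fun b Zs C R g0 \<phi> \<mu>"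
  unfolding dual_fun_def
proof (rule cInf_greatest)
  show "(\<lambda>z. reg_lagrangian b C R g0 \<phi> z \<mu>) ` prodset b Zs \<noteq> {}" using ne by blast
next
  fix x assume "x \<in> (\<lambda>z. reg_lagrangian b C R g0 \<phi> z \<mu>) ` prodset b Zs"
  then obtain z where z: "z \<in> prodset b Zs" and x: "x = reg_lagrangian b C R g0 \<phi> z \<mu>" by blast
  have "\<bar>\<mu> \<bullet> (R *v z + g0)\<bar> \<le> norm \<mu> * norm (R *v z + g0)" by (rule Cauchy_Schwarz_ineq2)
  also have "\<dots> \<le> norm \<mu> * W" using g_le[OF z] by (intro mult_left_mono) auto
  finally show "m - W * norm \<mu> - \<phi> / 2 * (norm \<mu>)\<^sup>2 \<le> x"
    using C_ge[OF z] by (simp add: x reg_lagrangian_def algebra_simps abs_le_iff)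
qed

theorem lemma2:
  fixes b :: "'n::finite \<Rightarrow> 'k::finite"
    and Zs :: "'k \<Rightarrow> (real^'n) set"
    and C :: "'k \<Rightarrow> real^'n \<Rightarrow> real"
    and DC :: "'k \<Rightarrow> real^'n \<Rightarrow> real^'n"
    and HC :: "'k \<Rightarrow> real^'n \<Rightarrow> real^'n \<Rightarrow> real^'n"
    and R :: "real^'n^'m::finite" and g0 :: "real^'m"
    and \<sigma>c \<sigma>g \<phi> \<sigma>h :: real
    and Dh :: "real^'m \<Rightarrow> real^'m"
  assumes Z_ne: "\<And>k. Zs k \<noteq> {}"
    and Z_convex: "\<And>k. convex (Zs k)"
    and Z_compact: "\<And>k. compact (Zs k)"
    and Z_block: "\<And>k. Zs k \<subseteq> blocksub b k"
    and C_open: "\<And>k. \<exists>U. open U \<and> Zs k \<subseteq> U \<and>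
                   (\<forall>x\<in>U. (C k has_derivative (\<lambda>v. DC k x \<bullet> v)) (at x))"
    and C_twice: "\<And>k x. x \<in> Zs k \<Longrightarrow> (DC k has_derivative HC k x) (at x)"
    and C_hess: "\<And>k x v. x \<in> Zs k \<Longrightarrow> v \<in> blocksub b k \<Longrightarrow>
                   \<sigma>c * (norm v)^2 \<le> v \<bullet> HC k x v"
    and C_lip: "\<And>k. \<exists>L. \<forall>x\<in>Zs k. \<forall>y\<in>Zs k.
                   norm (blockproj b k (DC k x) - blockproj b k (DC k y)) \<le> L * norm (x - y)"
    and \<sigma>c_pos: "\<sigma>c > 0"
    and \<sigma>g_pos: "\<sigma>g > 0"
    and R_bound: "frobenius_norm R \<le> \<sigma>g"
    and \<phi>_pos: "\<phi> > 0"
    and h_grad: "\<And>\<mu>. \<mu> \<in> nonneg_orthant \<Longrightarrow>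
                   (dual_fun b Zs C R g0 \<phi> has_derivative (\<lambda>v. Dh \<mu> \<bullet> v)) (at \<mu> within nonneg_orthant)"
    and \<sigma>h_pos: "\<sigma>h > 0"
    and strong: "\<And>\<mu> \<mu>'. \<mu> \<in> nonneg_orthant \<Longrightarrow> \<mu>' \<in> nonneg_orthant \<Longrightarrow>
                   (Dh \<mu> - Dh \<mu>') \<bullet> (\<mu> - \<mu>') \<le> - \<sigma>h * (norm (\<mu> - \<mu>'))^2"
  shows "\<sigma>h \<le> \<sigma>g^2 / \<sigma>c + \<phi>"
proof -
  have "continuous_on (Zs k) (C k)" for k
  proof -
    obtain U where "Zs k \<subseteq> U" "\<forall>x\<in>U. (C k has_derivative (\<lambda>v. DC k x \<bullet> v)) (at x)"
      using C_open[of k] by blast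
    thus ?thesis by (blast intro: continuous_at_imp_continuous_on has_derivative_continuous)
  qed
  then obtain m where C_ge: "\<And>z. z \<in> prodset b Zs \<Longrightarrow> m \<le> (\<Sum>k\<in>UNIV. C k (blockproj b k z))"
    using sum_blockproj_bounded_below Z_compact by metis
  have "bounded ((\<lambda>y. g0 + y) ` ((*v) R ` prodset b Zs))"
    by (intro bounded_translation bounded_linear_image bounded_prodset matrix_vector_mul_bounded_linear
        compact_imp_bounded Z_compact)
  then obtain W where g_le: "\<And>z. z \<in> prodset b Zs \<Longrightarrow> norm (R *v z + g0) \<le> W"
    by (auto simp: bounded_iff add.commute)
  have "\<sigma>h \<le> \<phi>"
  proof (rule strong_concavity_modulus_le_quadratic_decay[OF h_grad strong])
    fix \<mu> :: "real^'m"
    show "m - W * norm \<mu> - \<phi> / 2 * (norm \<mu>)\<^sup>2 \<le> dual_fun b Zs C R g0 \<phi> \<mu>"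
      using prodset_nonempty[OF Z_ne Z_block] C_ge g_le by (rule dual_fun_quadratic_decay)
  qed
  moreover have "0 \<le> \<sigma>g\<^sup>2 / \<sigma>c" using \<sigma>c_pos by simp
  ultimately show ?thesis by linarith
qed

end
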